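(* Let $a<b$, integers $1\le p\le n$, $P_1=P_1^T\in\mathbb{R}^{n\times n}$ invertible, $P_0=-P_0^T\in\mathbb{R}^{n\times n}$, $\mathcal{X}=L^2([a,b];\mathbb{R}^n)$, $Z$ a real Hilbert space, $H\in\mathcal{L}(Z,\mathcal{X})$, $\delta t>0$ fixed, and $\mathcal{J}e=P_1\frac{de}{d\zeta}+P_0e$ for $e\in H^1([a,b];\mathbb{R}^n)$. Let $\mathcal{D}^A$ be the set of all $(\delta f_\varepsilon,\delta f_w,\delta f_\partial,e_\varepsilon,e_w,e_\partial)\in(\mathcal{X}\times Z\times\mathbb{R}^n)^2$ with $e_\varepsilon\in H^1([a,b];\mathbb{R}^n)$, $\delta f_\varepsilon=\mathcal{J}e_\varepsilon\delta t+H\delta f_w$, $\delta f_\partial=\frac{1}{\sqrt2}P_1(e_\varepsilon(b)-e_\varepsilon(a))\delta t$, $e_\partial=\frac{1}{\sqrt2}(e_\varepsilon(b)+e_\varepsilon(a))$, $e_w=H^*e_\varepsilon$, where the boundary ports are split as $\delta f_\partial=(\delta f_{\partial,n-p},f_p)$, $e_\partial=(e_{\partial,n-p},e_p)$ with $\delta f_{\partial,n-p},e_{\partial,n-p}\in\mathbb{R}^{n-p}$ and $f_p,e_p\in\mathbb{R}^p$. Let $\mathcal{F}_3,\mathcal{E}_3$ be real Hilbert spaces, $j_3:\mathcal{F}_3\to\mathcal{E}_3$ a unitary invertible linear map, and let $\mathcal{D}^B\subset(\mathcal{F}_3\times\mathbb{R}^p)\times(\mathcal{E}_3\times\mathbb{R}^p)$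 be a Dirac structure with respect to the pairing $\langle(f^B,f,e^B,e),(\tilde f^B,\tilde f,\tilde e^B,\tilde e)\rangle=\langle f^B,j_3^{-1}\tilde e^B\rangle+\langle e^B,j_3\tilde f^B\rangle-\langle f,\tilde e\rangle-\langle e,\tilde f\rangle$. Define the composition $\mathcal{D}^A\circ\mathcal{D}^B$ as the set of all $(\delta f^A,f^B,e^A,e^B)$ with $\delta f^A=(\delta f_\varepsilon,\delta f_w,\delta f_{\partial,n-p})$, $e^A=(e_\varepsilon,e_w,e_{\partial,n-p})$, $f^B\in\mathcal{F}_3$, $e^B\in\mathcal{E}_3$, for which there exist $f_p,e_p\in\mathbb{R}^p$ with $(\delta f^A,f_p,e^A,e_p)\in\mathcal{D}^A$ and $(f^B,-f_p,e^B,e_p)\in\mathcal{D}^B$. Then $\mathcal{D}^A\circ\mathcal{D}^B$ is a (split) Dirac structure in $(\mathcal{X}\times Z\times\mathbb{R}^{n-p}\times\mathcal{F}_3)\times(\mathcal{X}\times Z\times\mathbb{R}^{n-p}\times\mathcal{E}_3)$ with respect to the pairing $$\langle\mathfrak{d},\tilde{\mathfrak{d}}\rangle_\dagger=\langle\delta f_\varepsilon,\tilde e_\varepsilon\rangle-\langle\delta f_w,\tilde e_w\rangle-\langle\delta f_{\partial,n-p},\tilde e_{\partial,n-p}\rangle+\langle f^B,j_3^{-1}\tilde e^B\rangle+\langle e_\varepsilon,\delta\tilde f_\varepsilon\rangle-\langle e_w,\delta\tilde f_w\rangle-\langle e_{\partial,n-p},\delta\tilde f_{\partial,n-p}\rangle+\langle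 e^B,j_3\tilde f^B\rangle,$$ i.e. $(\mathcal{D}^A\circ\mathcal{D}^B)^\perp=\mathcal{D}^A\circ\mathcal{D}^B$ with the orthogonal complement taken with respect to $\langle\cdot,\cdot\rangle_\dagger$.
   Context: Inner products on $\mathcal{X}$ are the standard $L^2$ ones and $H^*$ is the $L^2$-adjoint of $H$. A Dirac structure with respect to a symmetric bilinear pairing on a bond space is a linear subspace equal to its orthogonal complement with respect to that pairing; "split" means the pairing has the form $\langle f,j^{-1}\tilde e\rangle+\langle e,j\tilde f\rangle$ with $j$ block-diagonal, here $j=\mathrm{diag}(j_1,j_3)$, $j_1=\mathrm{diag}(I_\mathcal{X},-I_Z,-I_{\mathbb{R}^{n-p}})$. $\mathcal{D}^A$ is the stochastic port-Hamiltonian Dirac structure; the interconnection with $\mathcal{D}^B$ is through the $p$ boundary ports $f_p,e_p$ (with $j_2=-I_{\mathbb{R}^p}$ on that part). *)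

theory Defs
  imports "HOL-Analysis.Analysis"
begin

text \<open>Vectors of R^k are modelled as functions nat => real vanishing at indices >= k;
 n x n matrices as nat => nat => real (only entries with indices < n matter).\<close>

definition Rvec :: "nat \<Rightarrow> (nat \<Rightarrow> real) set" where
  "Rvec k = {v. \<forall>i. k \<le> i \<longrightarrow> v i = 0}"

definition dotk :: "nat \<Rightarrow> (nat \<Rightarrow> real) \<Rightarrow> (nat \<Rightarrow> real) \<Rightarrow> real" where
  "dotk k u v = (\<Sum>i<k. u i * v i)"

definition mv :: "nat \<Rightarrow> (nat \<Rightarrow> nat \<Rightarrow> real) \<Rightarrow> (nat \<Rightarrow> real) \<Rightarrow> (nat \<Rightarrow> real)" where
  "mv n M v = (\<lambda>i. if i < n then (\<Sum>j<n. M i j * v j) else 0)"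

definition sym_mat :: "nat \<Rightarrow> (nat \<Rightarrow> nat \<Rightarrow> real) \<Rightarrow> bool" where
  "sym_mat n M \<longleftrightarrow> (\<forall>i<n. \<forall>j<n. M i j = M j i)"

definition skew_mat :: "nat \<Rightarrow> (nat \<Rightarrow> nat \<Rightarrow> real) \<Rightarrow> bool" where
  "skew_mat n M \<longleftrightarrow> (\<forall>i<n. \<forall>j<n. M i j = - M j i)"

definition invertible_mat :: "nat \<Rightarrow> (nat \<Rightarrow> nat \<Rightarrow> real) \<Rightarrow> bool" where
  "invertible_mat n M \<longleftrightarrow> (\<exists>Q. \<forall>i<n. \<forall>j<n.
      (\<Sum>k<n. M i k * Q k j) = (if i = j then 1 else 0) \<and>
      (\<Sum>k<n. Q i k * M k j) = (if i = j then 1 else 0))"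

definition L2 :: "real \<Rightarrow> real \<Rightarrow> nat \<Rightarrow> (real \<Rightarrow> nat \<Rightarrow> real) set" where
  "L2 a b n = {f. (\<forall>x i. n \<le> i \<longrightarrow> f x i = 0) \<and>
      (\<forall>i<n. set_borel_measurable lborel {a..b} (\<lambda>x. f x i) \<and>
             set_integrable lborel {a..b} (\<lambda>x. (f x i)\<^sup>2))}"

definition L2ip :: "real \<Rightarrow> real \<Rightarrow> nat \<Rightarrow> (real \<Rightarrow> nat \<Rightarrow> real) \<Rightarrow> (real \<Rightarrow> nat \<Rightarrow> real) \<Rightarrow> real" where
  "L2ip a b n f g = (LINT x:{a..b}|lborel. (\<Sum>i<n. f x i * g x i))"

text \<open>e is in H^1([a,b];R^n) with absolutely continuous representative c and weak
 derivative g (g in L^2): c x = c a + int_a^x g on [a,b], and e = c a.e. on [a,b].\<close>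
definition H1rep :: "real \<Rightarrow> real \<Rightarrow> nat \<Rightarrow> (real \<Rightarrow> nat \<Rightarrow> real) \<Rightarrow> (real \<Rightarrow> nat \<Rightarrow> real)
     \<Rightarrow> (real \<Rightarrow> nat \<Rightarrow> real) \<Rightarrow> bool" where
  "H1rep a b n e c g \<longleftrightarrow> e \<in> L2 a b n \<and> g \<in> L2 a b n \<and>
     (\<forall>x i. n \<le> i \<longrightarrow> c x i = 0) \<and>
     (\<forall>x\<in>{a..b}. \<forall>i<n. c x i = c a i + (LINT t:{a..x}|lborel. g t i)) \<and>
     (AE x in lborel. x \<in> {a..b} \<longrightarrow> e x = c x)"

definition bounded_L2_map :: "real \<Rightarrow> real \<Rightarrow> nat \<Rightarrow> ('z::real_normed_vector \<Rightarrow> real \<Rightarrow> nat \<Rightarrow> real) \<Rightarrow> bool" where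
  "bounded_L2_map a b n H \<longleftrightarrow> (\<forall>z. H z \<in> L2 a b n) \<and>
     (\<forall>z1 z2. AE x in lborel. x \<in> {a..b} \<longrightarrow> H (z1 + z2) x = (\<lambda>i. H z1 x i + H z2 x i)) \<and>
     (\<forall>r z. AE x in lborel. x \<in> {a..b} \<longrightarrow> H (r *\<^sub>R z) x = (\<lambda>i. r * H z x i)) \<and>
     (\<exists>K. \<forall>z. L2ip a b n (H z) (H z) \<le> K * (norm z)\<^sup>2)"

definition is_adjoint :: "real \<Rightarrow> real \<Rightarrow> nat \<Rightarrow> ('z::real_inner \<Rightarrow> real \<Rightarrow> nat \<Rightarrow> real)
     \<Rightarrow> ((real \<Rightarrow> nat \<Rightarrow> real) \<Rightarrow> 'z) \<Rightarrow> bool" where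
  "is_adjoint a b n H Hs \<longleftrightarrow> (\<forall>z. \<forall>f\<in>L2 a b n. inner z (Hs f) = L2ip a b n (H z) f)"

definition orth :: "'d set \<Rightarrow> ('d \<Rightarrow> 'd \<Rightarrow> real) \<Rightarrow> 'd set \<Rightarrow> 'd set" where
  "orth B pair D = {y \<in> B. \<forall>x\<in>D. pair x y = 0}"

definition dirac :: "'d set \<Rightarrow> ('d \<Rightarrow> 'd \<Rightarrow> real) \<Rightarrow> 'd set \<Rightarrow> bool" where
  "dirac B pair D \<longleftrightarrow> D \<subseteq> B \<and> orth B pair D = D"

definition DA :: "real \<Rightarrow> real \<Rightarrow> nat \<Rightarrow> real \<Rightarrow> (nat \<Rightarrow> nat \<Rightarrow> real) \<Rightarrow> (nat \<Rightarrow> nat \<Rightarrow> real)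
    \<Rightarrow> ('z::real_inner \<Rightarrow> real \<Rightarrow> nat \<Rightarrow> real) \<Rightarrow> ((real \<Rightarrow> nat \<Rightarrow> real) \<Rightarrow> 'z)
    \<Rightarrow> (((real \<Rightarrow> nat \<Rightarrow> real) \<times> 'z \<times> (nat \<Rightarrow> real)) \<times> ((real \<Rightarrow> nat \<Rightarrow> real) \<times> 'z \<times> (nat \<Rightarrow> real))) set" where
  "DA a b n dt P1 P0 H Hs = {((dfe, dfw, dfd), (ee, ew, ed)).
     dfe \<in> L2 a b n \<and> ee \<in> L2 a b n \<and> dfd \<in> Rvec n \<and> ed \<in> Rvec n \<and>
     (\<exists>c g. H1rep a b n ee c g \<and>
        (AE x in lborel. x \<in> {a..b} \<longrightarrow>
           dfe x = (\<lambda>i. (mv n P1 (g x) i + mv n P0 (ee x) i) * dt + H dfw x i)) \<and>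
        dfd = (\<lambda>i. (1 / sqrt 2) * mv n P1 (\<lambda>k. c b k - c a k) i * dt) \<and>
        ed = (\<lambda>i. (1 / sqrt 2) * (c b i + c a i)) \<and>
        ew = Hs ee)}"

definition join :: "nat \<Rightarrow> nat \<Rightarrow> (nat \<Rightarrow> real) \<Rightarrow> (nat \<Rightarrow> real) \<Rightarrow> (nat \<Rightarrow> real)" where
  "join n p u v = (\<lambda>i. if i < n - p then u i else if i < n then v (i - (n - p)) else 0)"

definition bondB :: "nat \<Rightarrow> (('f \<times> (nat \<Rightarrow> real)) \<times> ('e \<times> (nat \<Rightarrow> real))) set" where
  "bondB p = {((fB, f), (eB, e)). f \<in> Rvec p \<and> e \<in> Rvec p}"

definition pairB :: "nat \<Rightarrow> ('f::real_inner \<Rightarrow> 'e::real_inner)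
    \<Rightarrow> (('f \<times> (nat \<Rightarrow> real)) \<times> ('e \<times> (nat \<Rightarrow> real)))
    \<Rightarrow> (('f \<times> (nat \<Rightarrow> real)) \<times> ('e \<times> (nat \<Rightarrow> real))) \<Rightarrow> real" where
  "pairB p j3 = (\<lambda>((fB, f), (eB, e)) ((fB', f'), (eB', e')).
      inner fB (inv j3 eB') + inner eB (j3 fB') - dotk p f e' - dotk p e f')"

definition compAB :: "real \<Rightarrow> real \<Rightarrow> nat \<Rightarrow> nat \<Rightarrow> real \<Rightarrow> (nat \<Rightarrow> nat \<Rightarrow> real) \<Rightarrow> (nat \<Rightarrow> nat \<Rightarrow> real)
    \<Rightarrow> ('z::real_inner \<Rightarrow> real \<Rightarrow> nat \<Rightarrow> real) \<Rightarrow> ((real \<Rightarrow> nat \<Rightarrow> real) \<Rightarrow> 'z)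
    \<Rightarrow> (('f \<times> (nat \<Rightarrow> real)) \<times> ('e \<times> (nat \<Rightarrow> real))) set
    \<Rightarrow> (((real \<Rightarrow> nat \<Rightarrow> real) \<times> 'z \<times> (nat \<Rightarrow> real) \<times> 'f) \<times>
        ((real \<Rightarrow> nat \<Rightarrow> real) \<times> 'z \<times> (nat \<Rightarrow> real) \<times> 'e)) set" where
  "compAB a b n p dt P1 P0 H Hs DB = {((dfe, dfw, dfnp, fB), (ee, ew, enp, eB)).
     dfnp \<in> Rvec (n - p) \<and> enp \<in> Rvec (n - p) \<and>
     (\<exists>fp ep. fp \<in> Rvec p \<and> ep \<in> Rvec p \<and>
        ((dfe, dfw, join n p dfnp fp), (ee, ew, join n p enp ep)) \<in> DA a b n dt P1 P0 H Hs \<and>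
        ((fB, (\<lambda>i. - fp i)), (eB, ep)) \<in> DB)}"

definition bondC :: "real \<Rightarrow> real \<Rightarrow> nat \<Rightarrow> nat \<Rightarrow>
    (((real \<Rightarrow> nat \<Rightarrow> real) \<times> 'z \<times> (nat \<Rightarrow> real) \<times> 'f) \<times>
     ((real \<Rightarrow> nat \<Rightarrow> real) \<times> 'z \<times> (nat \<Rightarrow> real) \<times> 'e)) set" where
  "bondC a b n p = {((dfe, dfw, dfnp, fB), (ee, ew, enp, eB)).
      dfe \<in> L2 a b n \<and> dfnp \<in> Rvec (n - p) \<and> ee \<in> L2 a b n \<and> enp \<in> Rvec (n - p)}"

definition pairC :: "real \<Rightarrow> real \<Rightarrow> nat \<Rightarrow> nat \<Rightarrow> ('f::real_inner \<Rightarrow> 'e::real_inner) \<Rightarrow>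
    (((real \<Rightarrow> nat \<Rightarrow> real) \<times> 'z::real_inner \<times> (nat \<Rightarrow> real) \<times> 'f) \<times>
     ((real \<Rightarrow> nat \<Rightarrow> real) \<times> 'z \<times> (nat \<Rightarrow> real) \<times> 'e)) \<Rightarrow>
    (((real \<Rightarrow> nat \<Rightarrow> real) \<times> 'z \<times> (nat \<Rightarrow> real) \<times> 'f) \<times>
     ((real \<Rightarrow> nat \<Rightarrow> real) \<times> 'z \<times> (nat \<Rightarrow> real) \<times> 'e)) \<Rightarrow> real" where
  "pairC a b n p j3 = (\<lambda>((dfe, dfw, dfnp, fB), (ee, ew, enp, eB)) ((dfe', dfw', dfnp', fB'), (ee', ew', enp', eB')).
      L2ip a b n dfe ee' - inner dfw ew' - dotk (n - p) dfnp enp' + inner fB (inv j3 eB')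
    + L2ip a b n ee dfe' - inner ew dfw' - dotk (n - p) enp dfnp' + inner eB (j3 fB'))"

end

theory Submission
  imports Defs
begin

text \<open>
  Isotropy: by Green's formula for \<open>\<J> = P\<^sub>1 d/d\<zeta> + P\<^sub>0\<close> (\<open>P\<^sub>1\<close> symmetric, \<open>P\<^sub>0\<close> skew),
  the pairing of two elements of \<open>D\<^sup>A\<close> reduces to their boundary terms; on the \<open>p\<close>
  interconnected ports these cancel against the pairing of \<open>D\<^sup>B\<close>, which is isotropic.

  Maximality: let \<open>y\<close> be orthogonal to the composition. Testing \<open>y\<close> against elements of
  \<open>D\<^sup>A\<close> with vanishing boundary values first gives \<open>e\<^sub>w = H\<^sup>* e\<^sub>\<epsilon>\<close> and then, by the
  du Bois-Reymond lemma, \<open>e\<^sub>\<epsilon> \<in> H\<^sup>1\<close> with \<open>\<delta>f\<^sub>\<epsilon> = \<J>e\<^sub>\<epsilon> \<delta>t + H \<delta>f\<^sub>w\<close>; so the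
  distributed part of \<open>y\<close> lies in \<open>D\<^sup>A\<close>. Since every boundary value in \<open>\<real>\<^sup>n\<close> is attained
  in \<open>D\<^sup>A\<close>, the remaining conditions are finite dimensional: they force the external
  ports of \<open>y\<close> to agree with its \<open>D\<^sup>A\<close> boundary values and, by maximality of \<open>D\<^sup>B\<close>,
  put its \<open>D\<^sup>B\<close> part into \<open>D\<^sup>B\<close>.
\<close>

section \<open>Lebesgue integrals over a compact interval\<close>

abbreviation lborel_on :: "real \<Rightarrow> real \<Rightarrow> real measure" where
  "lborel_on a b \<equiv> restrict_space lborel {a..b}"

lemma finite_measure_lborel_on: "finite_measure (lborel_on a b)"
  by (rule finite_measureI) (simp add: emeasure_restrict_space space_restrict_space emeasure_lborel_Icc_eq)

lemma AE_lborel_on_iff: "(AE x in lborel_on a b. P x) \<longleftrightarrow> (AE x in lborel. x \<in> {a..b} \<longrightarrow> P x)"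
  by (rule AE_restrict_space_iff) auto

lemma set_borel_measurable_iff_lborel_on:
  "set_borel_measurable lborel {a..b} (f :: real \<Rightarrow> real) \<longleftrightarrow> f \<in> borel_measurable (lborel_on a b)"
  unfolding set_borel_measurable_def
  by (rule borel_measurable_restrict_space_iff[symmetric]) auto

lemma set_integrable_iff_lborel_on:
  "set_integrable lborel {a..b} (f :: real \<Rightarrow> real) \<longleftrightarrow> integrable (lborel_on a b) f"
  by (subst set_integrable_eq) auto

lemma set_integral_eq_lborel_on:
  "(LINT x:{a..b}|lborel. (f :: real \<Rightarrow> real) x) = integral\<^sup>L (lborel_on a b) f"
  unfolding set_lebesgue_integral_def by (subst integral_restrict_space) auto

lemma set_integral_singleton [simp]: "(LINT t:{a}|lborel. (f :: real \<Rightarrow> real) t) = 0"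
proof -
  have "AE t in lborel. indicator {a} t *\<^sub>R f t = 0"
    using AE_lborel_singleton[of a] by eventually_elim (simp add: indicator_def)
  then show ?thesis
    unfolding set_lebesgue_integral_def by (rule integral_eq_zero_AE)
qed

lemma set_integral_Icc_const: "a \<le> b \<Longrightarrow> (LINT t:{a..b}|lborel. (k :: real)) = (b - a) * k"
  by (subst set_integral_const) (auto simp: emeasure_lborel_Icc_eq)

lemma set_integral_sum:
  fixes f :: "'i \<Rightarrow> 'a \<Rightarrow> real"
  assumes "\<And>j. j \<in> J \<Longrightarrow> set_integrable M A (f j)"
  shows "(LINT x:A|M. (\<Sum>j\<in>J. f j x)) = (\<Sum>j\<in>J. LINT x:A|M. f j x)"
  using assms unfolding set_lebesgue_integral_def set_integrable_def
  by (simp add: sum_distrib_left Bochner_Integration.integral_sum)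

lemma continuous_on_indefinite_set_integral:
  fixes g :: "real \<Rightarrow> real"
  assumes "set_integrable lborel {a..b} g"
  shows "continuous_on {a..b} (\<lambda>x. LINT t:{a..x}|lborel. g t)"
proof -
  have "continuous_on {a..b} (\<lambda>x. integral {a..x} g)"
    by (rule indefinite_integral_continuous_1[OF set_borel_integral_eq_integral(1)[OF assms]])
  moreover have "(LINT t:{a..x}|lborel. g t) = integral {a..x} g" if "x \<in> {a..b}" for x
    by (rule set_borel_integral_eq_integral(2), rule set_integrable_subset[OF assms]) (use that in auto)
  ultimately show ?thesis
    by (metis (no_types, lifting) continuous_on_eq)
qed

lemma integrable_pair_lborel_mult:
  fixes f g :: "real \<Rightarrow> real"
  assumes f: "integrable lborel f" and g: "integrable lborel g"
  shows "integrable (lborel \<Otimes>\<^sub>M lborel) (\<lambda>(x, y). f x * g y)"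
proof (rule lborel_pair.Fubini_integrable)
  show "(\<lambda>(x, y). f x * g y) \<in> borel_measurable (lborel \<Otimes>\<^sub>M lborel)"
    using f g by measurable
  have "integrable lborel (\<lambda>x. \<bar>f x\<bar> * (\<integral>y. \<bar>g y\<bar> \<partial>lborel))"
    using f by auto
  then show "integrable lborel (\<lambda>x. \<integral>y. norm (case (x, y) of (x, y) \<Rightarrow> f x * g y) \<partial>lborel)"
    by (simp add: abs_mult)
  show "AE x in lborel. integrable lborel (\<lambda>y. case (x, y) of (x, y) \<Rightarrow> f x * g y)"
    using g by auto
qed

text \<open>Fubini on the two triangles into which the diagonal cuts the plane.\<close>

lemma integral_mult_split_diagonal:
  fixes f g :: "real \<Rightarrow> real"
  assumes f: "integrable lborel f" and g: "integrable lborel g"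
  defines "F y \<equiv> \<integral>x. indicator {..<y} x * f x \<partial>lborel"
    and "G x \<equiv> \<integral>y. indicator {..x} y * g y \<partial>lborel"
  shows "integrable lborel (\<lambda>x. f x * G x)" and "integrable lborel (\<lambda>y. F y * g y)"
    and "(\<integral>x. f x * G x \<partial>lborel) + (\<integral>y. F y * g y \<partial>lborel)
      = (\<integral>x. f x \<partial>lborel) * (\<integral>y. g y \<partial>lborel)"
proof -
  note [measurable] = borel_measurable_integrable[OF f] borel_measurable_integrable[OF g]
  define h1 where "h1 x y = f x * (if y \<le> x then g y else 0)" for x y :: real
  define h2 where "h2 x y = (if x < y then f x else 0) * g y" for x y :: real
  note fg = integrable_pair_lborel_mult[OF f g]
  have "case_prod h1 \<in> borel_measurable (lborel \<Otimes>\<^sub>M lborel)"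
    unfolding h1_def by measurable
  then have h1: "integrable (lborel \<Otimes>\<^sub>M lborel) (case_prod h1)"
    by (rule Bochner_Integration.integrable_bound[OF fg]) (auto simp: h1_def abs_mult)
  have "case_prod h2 \<in> borel_measurable (lborel \<Otimes>\<^sub>M lborel)"
    unfolding h2_def by measurable
  then have h2: "integrable (lborel \<Otimes>\<^sub>M lborel) (case_prod h2)"
    by (rule Bochner_Integration.integrable_bound[OF fg]) (auto simp: h2_def abs_mult)
  have "h1 x y = f x * (indicator {..x} y * g y)" "h2 x y = indicator {..<y} x * f x * g y" for x y
    by (simp_all add: h1_def h2_def)
  then have fst: "(\<lambda>x. \<integral>y. h1 x y \<partial>lborel) = (\<lambda>x. f x * G x)"
    and snd: "(\<lambda>y. \<integral>x. h2 x y \<partial>lborel) = (\<lambda>y. F y * g y)"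
    by (simp_all add: G_def F_def)
  show "integrable lborel (\<lambda>x. f x * G x)"
    using lborel_pair.integrable_fst[OF h1] unfolding fst .
  show "integrable lborel (\<lambda>y. F y * g y)"
    using lborel_pair.integrable_snd[OF h2] unfolding snd .
  have "(\<lambda>(x, y). f x * g y) = (\<lambda>z. case_prod h1 z + case_prod h2 z)"
    by (auto simp: h1_def h2_def fun_eq_iff)
  then have "integral\<^sup>L (lborel \<Otimes>\<^sub>M lborel) (\<lambda>(x, y). f x * g y)
      = integral\<^sup>L (lborel \<Otimes>\<^sub>M lborel) (case_prod h1) + integral\<^sup>L (lborel \<Otimes>\<^sub>M lborel) (case_prod h2)"
    using h1 h2 by simp
  also have "\<dots> = (\<integral>x. f x * G x \<partial>lborel) + (\<integral>y. F y * g y \<partial>lborel)"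
    using lborel_pair.integral_fst[OF h1] lborel_pair.integral_snd[OF h2] by (simp add: fst snd)
  finally show "(\<integral>x. f x * G x \<partial>lborel) + (\<integral>y. F y * g y \<partial>lborel)
      = (\<integral>x. f x \<partial>lborel) * (\<integral>y. g y \<partial>lborel)"
    using lborel_pair.integral_fst[of "\<lambda>x y. f x * g y"] fg by simp
qed

lemma integral_by_parts_indefinite:
  fixes g1 g2 :: "real \<Rightarrow> real"
  assumes i1: "set_integrable lborel {a..b} g1" and i2: "set_integrable lborel {a..b} g2"
  defines "h x \<equiv> g1 x * (LINT t:{a..x}|lborel. g2 t) + (LINT t:{a..x}|lborel. g1 t) * g2 x"
  shows "integrable (lborel_on a b) h"
    and "integral\<^sup>L (lborel_on a b) h = (LINT t:{a..b}|lborel. g1 t) * (LINT t:{a..b}|lborel. g2 t)"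
proof -
  define f where "f x = indicator {a..b} x * g1 x" for x
  define g where "g x = indicator {a..b} x * g2 x" for x
  have f: "integrable lborel f" and g: "integrable lborel g"
    using i1 i2 unfolding set_integrable_def f_def g_def by simp_all
  note split = integral_mult_split_diagonal[OF f g]
  have G: "(\<integral>y. indicator {..x} y * g y \<partial>lborel) = (LINT t:{a..x}|lborel. g2 t)"
    if "x \<in> {a..b}" for x
    unfolding set_lebesgue_integral_def g_def
    by (rule Bochner_Integration.integral_cong) (use that in \<open>auto split: split_indicator\<close>)
  have F: "(\<integral>x. indicator {..<y} x * f x \<partial>lborel) = (LINT t:{a..y}|lborel. g1 t)"
    if "y \<in> {a..b}" for y
    unfolding set_lebesgue_integral_def f_def
  proof (rule integral_cong_AE)
    show "(\<lambda>x. indicator {..<y} x * (indicator {a..b} x * g1 x)) \<in> borel_measurable lborel"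
      using borel_measurable_integrable[OF f] unfolding f_def by measurable
    show "(\<lambda>x. indicator {a..y} x *\<^sub>R g1 x) \<in> borel_measurable lborel"
      using set_integrable_subset[OF i1, of "{a..y}"] that by (auto simp: set_integrable_def)
    show "AE x in lborel. indicator {..<y} x * (indicator {a..b} x * g1 x) = indicator {a..y} x *\<^sub>R g1 x"
      using AE_lborel_singleton[of y] by eventually_elim (use that in \<open>auto split: split_indicator\<close>)
  qed
  have h: "indicator {a..b} x * h x
      = f x * (\<integral>y. indicator {..x} y * g y \<partial>lborel) + (\<integral>x'. indicator {..<x} x' * f x' \<partial>lborel) * g x" for x
  proof (cases "x \<in> {a..b}")
    case True
    then have "f x = g1 x" "g x = g2 x" by (simp_all add: f_def g_def)
    with True show ?thesis by (simp add: h_def F G)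
  qed (simp add: f_def g_def)
  have "integrable lborel (\<lambda>x. indicator {a..b} x * h x)"
    unfolding h using split(1,2) by simp
  then show "integrable (lborel_on a b) h"
    by (simp add: set_integrable_def flip: set_integrable_iff_lborel_on)
  then have "integral\<^sup>L (lborel_on a b) h = (\<integral>x. indicator {a..b} x * h x \<partial>lborel)"
    by (simp add: set_lebesgue_integral_def flip: set_integral_eq_lborel_on)
  also have "\<dots> = (\<integral>x. f x \<partial>lborel) * (\<integral>y. g y \<partial>lborel)"
    unfolding h using split by simp
  finally show "integral\<^sup>L (lborel_on a b) h = (LINT t:{a..b}|lborel. g1 t) * (LINT t:{a..b}|lborel. g2 t)"
    by (simp add: set_lebesgue_integral_def f_def g_def)
qed

lemma integral_by_parts_primitives:
  fixes g1 g2 k1 k2 :: "real \<Rightarrow> real"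
  assumes "a \<le> b"
    and i1: "set_integrable lborel {a..b} g1" and i2: "set_integrable lborel {a..b} g2"
    and k1: "\<And>x. x \<in> {a..b} \<Longrightarrow> k1 x = k1 a + (LINT t:{a..x}|lborel. g1 t)"
    and k2: "\<And>x. x \<in> {a..b} \<Longrightarrow> k2 x = k2 a + (LINT t:{a..x}|lborel. g2 t)"
  shows "integrable (lborel_on a b) (\<lambda>x. g1 x * k2 x + k1 x * g2 x)"
    and "integral\<^sup>L (lborel_on a b) (\<lambda>x. g1 x * k2 x + k1 x * g2 x) = k1 b * k2 b - k1 a * k2 a"
proof -
  define h where "h x = g1 x * (LINT t:{a..x}|lborel. g2 t) + (LINT t:{a..x}|lborel. g1 t) * g2 x" for x
  note ibp = integral_by_parts_indefinite[OF i1 i2, folded h_def]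
  have j1: "integrable (lborel_on a b) g1" and j2: "integrable (lborel_on a b) g2"
    using i1 i2 by (simp_all add: set_integrable_iff_lborel_on)
  have eq: "g1 x * k2 x + k1 x * g2 x = k2 a * g1 x + k1 a * g2 x + h x" if "x \<in> {a..b}" for x
    using k1[OF that] k2[OF that] by (simp add: h_def algebra_simps)
  have "integrable (lborel_on a b) (\<lambda>x. k2 a * g1 x + k1 a * g2 x + h x)"
    using j1 j2 ibp(1) by auto
  then show "integrable (lborel_on a b) (\<lambda>x. g1 x * k2 x + k1 x * g2 x)"
    by (rule Bochner_Integration.integrable_cong[THEN iffD1, rotated 2]) (auto simp: eq)
  have "integral\<^sup>L (lborel_on a b) (\<lambda>x. g1 x * k2 x + k1 x * g2 x)
      = integral\<^sup>L (lborel_on a b) (\<lambda>x. k2 a * g1 x + k1 a * g2 x + h x)"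
    by (rule Bochner_Integration.integral_cong) (auto simp: eq)
  also have "\<dots> = k2 a * (k1 b - k1 a) + k1 a * (k2 b - k2 a) + (k1 b - k1 a) * (k2 b - k2 a)"
    using j1 j2 ibp k1[of b] k2[of b] \<open>a \<le> b\<close> by (simp add: set_integral_eq_lborel_on)
  finally show "integral\<^sup>L (lborel_on a b) (\<lambda>x. g1 x * k2 x + k1 x * g2 x) = k1 b * k2 b - k1 a * k2 a"
    by (simp add: algebra_simps)
qed

section \<open>Square integrable functions\<close>

definition square_integrable :: "'a measure \<Rightarrow> ('a \<Rightarrow> real) \<Rightarrow> bool" where
  "square_integrable M f \<longleftrightarrow> f \<in> borel_measurable M \<and> integrable M (\<lambda>x. (f x)\<^sup>2)"

lemma integrable_mult_square_integrable:
  assumes "square_integrable M f" "square_integrable M g"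
  shows "integrable M (\<lambda>x. f x * g x)"
proof (rule Bochner_Integration.integrable_bound)
  show "integrable M (\<lambda>x. (f x)\<^sup>2 + (g x)\<^sup>2)"
    using assms unfolding square_integrable_def by auto
  show "(\<lambda>x. f x * g x) \<in> borel_measurable M"
    using assms unfolding square_integrable_def by auto
  have "\<bar>f x * g x\<bar> \<le> (f x)\<^sup>2 + (g x)\<^sup>2" for x
  proof -
    have "2 * \<bar>f x\<bar> * \<bar>g x\<bar> \<le> (f x)\<^sup>2 + (g x)\<^sup>2"
      using sum_squares_bound[of "\<bar>f x\<bar>" "\<bar>g x\<bar>"] by (simp add: power2_abs)
    then show ?thesis
      unfolding abs_mult using mult_nonneg_nonneg[OF abs_ge_zero abs_ge_zero, of "f x" "g x"] by linarith
  qed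
  then show "AE x in M. norm (f x * g x) \<le> norm ((f x)\<^sup>2 + (g x)\<^sup>2)"
    by simp
qed

lemma square_integrable_add:
  assumes "square_integrable M f" "square_integrable M g"
  shows "square_integrable M (\<lambda>x. f x + g x)"
proof -
  have "integrable M (\<lambda>x. (f x)\<^sup>2 + (g x)\<^sup>2 + 2 * (f x * g x))"
    using assms integrable_mult_square_integrable[OF assms] unfolding square_integrable_def by auto
  then show ?thesis
    using assms unfolding square_integrable_def by (auto simp: power2_sum ac_simps)
qed

lemma square_integrable_mult_left:
  "square_integrable M f \<Longrightarrow> square_integrable M (\<lambda>x. r * f x)"
  unfolding square_integrable_def by (auto simp: power_mult_distrib)

lemma square_integrable_diff:
  assumes "square_integrable M f" "square_integrable M g"
  shows "square_integrable M (\<lambda>x. f x - g x)"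
  using square_integrable_add[OF assms(1) square_integrable_mult_left[OF assms(2), of "-1"]] by simp

lemma square_integrable_sum:
  "(\<And>j. j \<in> J \<Longrightarrow> square_integrable M (f j)) \<Longrightarrow> square_integrable M (\<lambda>x. \<Sum>j\<in>J. f j x)"
proof (induction J rule: infinite_finite_induct)
  case (insert j J) then show ?case by (simp add: square_integrable_add)
qed (auto simp: square_integrable_def)

lemma square_integrable_continuous_on:
  assumes "continuous_on {a..b} f"
  shows "square_integrable (lborel_on a b) f"
proof -
  have "integrable (lborel_on a b) f" "integrable (lborel_on a b) (\<lambda>x. (f x)\<^sup>2)"
    using assms
    by (auto simp flip: set_integrable_iff_lborel_on intro!: borel_integrable_atLeastAtMost' continuous_intros)
  then show ?thesis
    unfolding square_integrable_def by auto
qed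

section \<open>Vectors and matrices\<close>

lemma Rvec_eqI:
  assumes "u \<in> Rvec k" "v \<in> Rvec k" "\<And>i. i < k \<Longrightarrow> u i = v i"
  shows "u = v"
proof
  fix i show "u i = v i"
    using assms by (cases "i < k") (auto simp: Rvec_def)
qed

lemma zero_in_Rvec [simp]: "(\<lambda>i. 0) \<in> Rvec k"
  by (simp add: Rvec_def)

lemma dotk_commute: "dotk n u v = dotk n v u"
  by (simp add: dotk_def mult.commute)

lemma dotk_zero_left [simp]: "dotk n (\<lambda>i. 0) v = 0"
  by (simp add: dotk_def)

lemma dotk_zero_right [simp]: "dotk n u (\<lambda>i. 0) = 0"
  by (simp add: dotk_def)

lemma dotk_minus_left: "dotk n (\<lambda>i. - u i) v = - dotk n u v"
  by (simp add: dotk_def sum_negf)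

lemma dotk_minus_right: "dotk n u (\<lambda>i. - v i) = - dotk n u v"
  by (simp add: dotk_def sum_negf)

lemma dotk_diff_right: "dotk n u (\<lambda>i. v i - w i) = dotk n u v - dotk n u w"
  by (simp add: dotk_def algebra_simps sum_subtractf)

lemma dotk_self_eq_0D: "dotk n u u = 0 \<Longrightarrow> i < n \<Longrightarrow> u i = 0"
  by (simp add: dotk_def sum_nonneg_eq_0_iff)

lemma Rvec_eqI_dotk:
  assumes u: "u \<in> Rvec k" and v: "v \<in> Rvec k"
    and orth: "\<And>w. w \<in> Rvec k \<Longrightarrow> dotk k w (\<lambda>i. u i - v i) = 0"
  shows "u = v"
proof -
  have "dotk k (\<lambda>i. u i - v i) (\<lambda>i. u i - v i) = 0"
    using orth[of "\<lambda>i. u i - v i"] u v by (simp add: Rvec_def)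
  then show ?thesis
    using dotk_self_eq_0D by (intro Rvec_eqI[OF u v]) fastforce
qed

lemma mv_cong: "(\<And>j. j < n \<Longrightarrow> u j = v j) \<Longrightarrow> mv n M u = mv n M v"
  unfolding mv_def by (intro ext if_cong refl sum.cong) auto

lemma mv_zero [simp]: "mv n M (\<lambda>k. 0) = (\<lambda>i. 0)"
  by (auto simp: mv_def)

lemma mv_mult: "mv n M (\<lambda>k. r * u k) = (\<lambda>i. r * mv n M u i)"
  by (auto simp: mv_def sum_distrib_left mult_ac)

lemma mv_diff: "mv n M (\<lambda>k. u k - v k) = (\<lambda>i. mv n M u i - mv n M v i)"
  by (auto simp: mv_def algebra_simps sum_subtractf)

lemma mv_in_Rvec: "mv n M u \<in> Rvec n"
  by (simp add: Rvec_def mv_def)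

lemma mv_right_inverse:
  assumes AB: "\<forall>i<n. \<forall>j<n. (\<Sum>k<n. A i k * B k j) = (if i = j then 1 else 0)"
    and u: "u \<in> Rvec n"
  shows "mv n A (mv n B u) = u"
proof (rule Rvec_eqI[OF mv_in_Rvec u])
  fix i assume "i < n"
  have "mv n A (mv n B u) i = (\<Sum>k<n. \<Sum>j<n. A i k * B k j * u j)"
    using \<open>i < n\<close> by (simp add: mv_def sum_distrib_left mult.assoc)
  also have "\<dots> = (\<Sum>j<n. (\<Sum>k<n. A i k * B k j) * u j)"
    by (subst sum.swap) (simp add: sum_distrib_right)
  also have "\<dots> = (\<Sum>j<n. if i = j then u j else 0)"
    using AB \<open>i < n\<close> by (intro sum.cong) auto
  also have "\<dots> = u i"
    using \<open>i < n\<close> by simp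
  finally show "mv n A (mv n B u) i = u i" .
qed

lemma dotk_mv_left: "dotk n (mv n M u) v = (\<Sum>i<n. \<Sum>j<n. M i j * u j * v i)"
  by (simp add: dotk_def mv_def sum_distrib_right)

lemma dotk_mv_right: "dotk n u (mv n M v) = (\<Sum>i<n. \<Sum>j<n. M j i * u j * v i)"
proof -
  have "dotk n u (mv n M v) = (\<Sum>j<n. \<Sum>i<n. M j i * u j * v i)"
    unfolding dotk_def mv_def by (intro sum.cong refl) (simp add: sum_distrib_left mult.commute mult.left_commute)
  also have "\<dots> = (\<Sum>i<n. \<Sum>j<n. M j i * u j * v i)"
    by (rule sum.swap)
  finally show ?thesis .
qed

lemma dotk_mv_sym:
  assumes "sym_mat n M"
  shows "dotk n (mv n M u) v = dotk n u (mv n M v)"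
proof -
  have "M i j * u j * v i = M j i * u j * v i" if "i \<in> {..<n}" "j \<in> {..<n}" for i j
    using assms that unfolding sym_mat_def by (metis lessThan_iff)
  then show ?thesis
    unfolding dotk_mv_left dotk_mv_right by (intro sum.cong refl) blast
qed

lemma dotk_mv_skew:
  assumes "skew_mat n M"
  shows "dotk n (mv n M u) v = - dotk n u (mv n M v)"
proof -
  have "M j i * u j * v i = - (M i j * u j * v i)" if "i \<in> {..<n}" "j \<in> {..<n}" for i j
    using assms that unfolding skew_mat_def by (metis lessThan_iff mult_minus_left)
  then have "dotk n u (mv n M v) = (\<Sum>i<n. \<Sum>j<n. - (M i j * u j * v i))"
    unfolding dotk_mv_right by (intro sum.cong refl) simp
  then show ?thesis
    by (simp add: dotk_mv_left sum_negf)
qed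

lemma join_in_Rvec: "join n p u v \<in> Rvec n"
  by (auto simp: join_def Rvec_def)

lemma join_zero [simp]: "join n p (\<lambda>i. 0) (\<lambda>i. 0) = (\<lambda>i. 0)"
  by (simp add: join_def fun_eq_iff)

lemma Rvec_join_cases:
  assumes "p \<le> n" "w \<in> Rvec n"
  obtains u v where "u \<in> Rvec (n - p)" "v \<in> Rvec p" "w = join n p u v"
proof
  show "(\<lambda>i. if i < n - p then w i else 0) \<in> Rvec (n - p)" "(\<lambda>i. if i < p then w (i + (n - p)) else 0) \<in> Rvec p"
    by (simp_all add: Rvec_def)
  show "w = join n p (\<lambda>i. if i < n - p then w i else 0) (\<lambda>i. if i < p then w (i + (n - p)) else 0)"
    using assms by (auto simp: join_def Rvec_def fun_eq_iff)
qed

lemma dotk_join: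
  assumes "p \<le> n"
  shows "dotk n (join n p u v) (join n p u' v') = dotk (n - p) u u' + dotk p v v'"
proof -
  have split: "{..<n} = {..<n - p} \<union> {n - p..<n}" by auto
  have shift: "{n - p..<n} = {0 + (n - p)..<p + (n - p)}" using assms by simp
  have "dotk n (join n p u v) (join n p u' v')
      = (\<Sum>i<n - p. join n p u v i * join n p u' v' i) + (\<Sum>i\<in>{n - p..<n}. join n p u v i * join n p u' v' i)"
    unfolding dotk_def split by (rule sum.union_disjoint) auto
  also have "(\<Sum>i<n - p. join n p u v i * join n p u' v' i) = dotk (n - p) u u'"
    unfolding dotk_def by (rule sum.cong[OF refl]) (simp add: join_def)
  also have "(\<Sum>i\<in>{n - p..<n}. join n p u v i * join n p u' v' i) = dotk p v v'"
    unfolding shift sum.shift_bounds_nat_ivl dotk_def atLeast0LessThan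
    by (rule sum.cong[OF refl]) (use assms in \<open>auto simp: join_def\<close>)
  finally show ?thesis .
qed

section \<open>The space \<open>L\<^sup>2([a, b]; \<real>\<^sup>n)\<close>\<close>

lemma L2_iff:
  "f \<in> L2 a b n \<longleftrightarrow>
     (\<forall>x i. n \<le> i \<longrightarrow> f x i = 0) \<and> (\<forall>i<n. square_integrable (lborel_on a b) (\<lambda>x. f x i))"
  unfolding L2_def square_integrable_def
  by (simp add: set_borel_measurable_iff_lborel_on set_integrable_iff_lborel_on)

lemma L2_vanishing: "f \<in> L2 a b n \<Longrightarrow> n \<le> i \<Longrightarrow> f x i = 0"
  by (simp add: L2_iff)

lemma L2_set_integrable: "f \<in> L2 a b n \<Longrightarrow> i < n \<Longrightarrow> set_integrable lborel {a..b} (\<lambda>x. f x i)"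
  unfolding L2_iff set_integrable_iff_lborel_on
  using finite_measure.square_integrable_imp_integrable[OF finite_measure_lborel_on]
  unfolding square_integrable_def by blast

lemma L2_add: "f \<in> L2 a b n \<Longrightarrow> g \<in> L2 a b n \<Longrightarrow> (\<lambda>x i. f x i + g x i) \<in> L2 a b n"
  by (auto simp: L2_iff intro!: square_integrable_add)

lemma L2_diff: "f \<in> L2 a b n \<Longrightarrow> g \<in> L2 a b n \<Longrightarrow> (\<lambda>x i. f x i - g x i) \<in> L2 a b n"
  by (auto simp: L2_iff intro!: square_integrable_diff)

lemma L2_mult: "f \<in> L2 a b n \<Longrightarrow> (\<lambda>x i. r * f x i) \<in> L2 a b n"
  by (auto simp: L2_iff intro!: square_integrable_mult_left)

lemma L2_const: "m \<in> Rvec n \<Longrightarrow> (\<lambda>x. m) \<in> L2 a b n"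
  by (auto simp: L2_iff Rvec_def intro!: square_integrable_continuous_on)

lemma L2_mv: "f \<in> L2 a b n \<Longrightarrow> (\<lambda>x. mv n M (f x)) \<in> L2 a b n"
  by (auto simp: L2_iff mv_def intro!: square_integrable_sum square_integrable_mult_left)

lemma L2ip_eq_integral: "L2ip a b n f g = integral\<^sup>L (lborel_on a b) (\<lambda>x. \<Sum>i<n. f x i * g x i)"
  unfolding L2ip_def by (rule set_integral_eq_lborel_on)

lemma integrable_L2ip:
  "f \<in> L2 a b n \<Longrightarrow> g \<in> L2 a b n \<Longrightarrow> integrable (lborel_on a b) (\<lambda>x. \<Sum>i<n. f x i * g x i)"
  by (auto simp: L2_iff intro!: Bochner_Integration.integrable_sum integrable_mult_square_integrable)

lemma L2ip_commute: "L2ip a b n f g = L2ip a b n g f"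
  by (simp add: L2ip_def mult.commute)

lemma L2ip_zero_left [simp]: "L2ip a b n (\<lambda>x i. 0) g = 0"
  by (simp add: L2ip_def)

lemma L2ip_mult_left: "L2ip a b n (\<lambda>x i. r * f x i) g = r * L2ip a b n f g"
  by (simp add: L2ip_def mult.assoc flip: sum_distrib_left)

lemma L2ip_add_left:
  assumes "f \<in> L2 a b n" "g \<in> L2 a b n" "h \<in> L2 a b n"
  shows "L2ip a b n (\<lambda>x i. f x i + g x i) h = L2ip a b n f h + L2ip a b n g h"
  using integrable_L2ip[OF assms(1,3)] integrable_L2ip[OF assms(2,3)]
  by (simp add: L2ip_eq_integral distrib_right sum.distrib)

lemma L2ip_diff_left:
  assumes "f \<in> L2 a b n" "g \<in> L2 a b n" "h \<in> L2 a b n"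
  shows "L2ip a b n (\<lambda>x i. f x i - g x i) h = L2ip a b n f h - L2ip a b n g h"
  using integrable_L2ip[OF assms(1,3)] integrable_L2ip[OF assms(2,3)]
  by (simp add: L2ip_eq_integral left_diff_distrib sum_subtractf)

lemma L2ip_cong_left:
  "(\<And>x i. x \<in> {a..b} \<Longrightarrow> i < n \<Longrightarrow> f x i = f' x i) \<Longrightarrow> L2ip a b n f h = L2ip a b n f' h"
  unfolding L2ip_eq_integral by (rule Bochner_Integration.integral_cong) auto

lemma L2ip_cong_AE_left:
  assumes "f \<in> L2 a b n" "f' \<in> L2 a b n" "h \<in> L2 a b n"
    and "AE x in lborel_on a b. \<forall>i<n. f x i = f' x i"
  shows "L2ip a b n f h = L2ip a b n f' h"
  unfolding L2ip_eq_integral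
proof (rule integral_cong_AE)
  show "AE x in lborel_on a b. (\<Sum>i<n. f x i * h x i) = (\<Sum>i<n. f' x i * h x i)"
    using assms(4) by eventually_elim simp
qed (use integrable_L2ip[OF assms(1,3)] integrable_L2ip[OF assms(2,3)] in auto)

lemma L2ip_mv_sym:
  "sym_mat n M \<Longrightarrow> L2ip a b n (\<lambda>x. mv n M (f x)) g = L2ip a b n f (\<lambda>x. mv n M (g x))"
  using dotk_mv_sym unfolding L2ip_def dotk_def by simp

lemma L2ip_mv_skew:
  "skew_mat n M \<Longrightarrow> L2ip a b n (\<lambda>x. mv n M (f x)) g = - L2ip a b n f (\<lambda>x. mv n M (g x))"
  using dotk_mv_skew unfolding L2ip_eq_integral dotk_def by (simp add: sum_negf)

lemma L2ip_self_eq_0D: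
  assumes "f \<in> L2 a b n" "L2ip a b n f f = 0"
  shows "AE x in lborel_on a b. \<forall>i<n. f x i = 0"
proof -
  have "AE x in lborel_on a b. (\<Sum>i<n. f x i * f x i) = 0"
    using assms(2) integrable_L2ip[OF assms(1,1)]
    by (simp add: L2ip_eq_integral integral_nonneg_eq_0_iff_AE sum_nonneg)
  then show ?thesis
    by eventually_elim (simp add: sum_nonneg_eq_0_iff)
qed

section \<open>Primitives and weak derivatives\<close>

definition is_primitive ::
    "real \<Rightarrow> real \<Rightarrow> nat \<Rightarrow> (real \<Rightarrow> nat \<Rightarrow> real) \<Rightarrow> (real \<Rightarrow> nat \<Rightarrow> real) \<Rightarrow> bool" where
  "is_primitive a b n c g \<longleftrightarrow> g \<in> L2 a b n \<and> (\<forall>x i. n \<le> i \<longrightarrow> c x i = 0) \<and>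
     (\<forall>x\<in>{a..b}. \<forall>i<n. c x i = c a i + (LINT t:{a..x}|lborel. g t i))"

lemma is_primitiveD:
  assumes "is_primitive a b n c g"
  shows "g \<in> L2 a b n" and "n \<le> i \<Longrightarrow> c x i = 0"
    and "x \<in> {a..b} \<Longrightarrow> i < n \<Longrightarrow> c x i = c a i + (LINT t:{a..x}|lborel. g t i)"
  using assms unfolding is_primitive_def by blast+

lemma is_primitive_in_L2:
  assumes "is_primitive a b n c g"
  shows "c \<in> L2 a b n"
  unfolding L2_iff
proof (intro conjI allI impI)
  show "n \<le> i \<Longrightarrow> c x i = 0" for x i
    by (rule is_primitiveD(2)[OF assms])
  fix i assume "i < n"
  have "continuous_on {a..b} (\<lambda>x. c a i + (LINT t:{a..x}|lborel. g t i))"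
    by (rule continuous_on_add[OF continuous_on_const continuous_on_indefinite_set_integral])
       (rule L2_set_integrable[OF is_primitiveD(1)[OF assms] \<open>i < n\<close>])
  then have "continuous_on {a..b} (\<lambda>x. c x i)"
    by (rule continuous_on_eq) (metis is_primitiveD(3)[OF assms _ \<open>i < n\<close>])
  then show "square_integrable (lborel_on a b) (\<lambda>x. c x i)"
    by (rule square_integrable_continuous_on)
qed

lemma is_primitive_indefinite_integral:
  assumes "g \<in> L2 a b n" "\<alpha> \<in> Rvec n"
  shows "is_primitive a b n (\<lambda>x i. \<alpha> i + (LINT t:{a..x}|lborel. g t i)) g"
  using assms by (simp add: is_primitive_def Rvec_def L2_vanishing[OF assms(1)])

lemma is_primitive_zero: "is_primitive a b n (\<lambda>x i. 0) (\<lambda>x i. 0)"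
  using is_primitive_indefinite_integral[OF L2_const[OF zero_in_Rvec] zero_in_Rvec, of a b]
  by (simp add: set_lebesgue_integral_def)

lemma is_primitive_mv:
  assumes "is_primitive a b n c g"
  shows "is_primitive a b n (\<lambda>x. mv n M (c x)) (\<lambda>x. mv n M (g x))"
  unfolding is_primitive_def
proof (intro conjI ballI allI impI)
  show "(\<lambda>x. mv n M (g x)) \<in> L2 a b n"
    by (rule L2_mv[OF is_primitiveD(1)[OF assms]])
  show "n \<le> i \<Longrightarrow> mv n M (c x) i = 0" for x i
    by (simp add: mv_def)
  fix x i assume x: "x \<in> {a..b}" and "i < n"
  have "set_integrable lborel {a..x} (\<lambda>t. g t j)" if "j < n" for j
    by (rule set_integrable_subset[OF L2_set_integrable[OF is_primitiveD(1)[OF assms] that]])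
       (use x in auto)
  then have "(LINT t:{a..x}|lborel. (\<Sum>j<n. M i j * g t j)) = (\<Sum>j<n. M i j * (LINT t:{a..x}|lborel. g t j))"
    by (subst set_integral_sum) auto
  then have "(LINT t:{a..x}|lborel. mv n M (g t) i) = (\<Sum>j<n. M i j * (LINT t:{a..x}|lborel. g t j))"
    using \<open>i < n\<close> by (simp add: mv_def)
  moreover have "mv n M (c x) i = (\<Sum>j<n. M i j * (c a j + (LINT t:{a..x}|lborel. g t j)))"
    using \<open>i < n\<close> is_primitiveD(3)[OF assms x] by (simp add: mv_def)
  ultimately show "mv n M (c x) i = mv n M (c a) i + (LINT t:{a..x}|lborel. mv n M (g t) i)"
    using \<open>i < n\<close> by (simp add: mv_def distrib_left sum.distrib)
qed

lemma L2ip_by_parts: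
  assumes "a \<le> b" "is_primitive a b n c g" "is_primitive a b n c' g'"
  shows "L2ip a b n g c' + L2ip a b n c g' = dotk n (c b) (c' b) - dotk n (c a) (c' a)"
proof -
  note g = is_primitiveD(1)[OF assms(2)] and g' = is_primitiveD(1)[OF assms(3)]
  note ibp = integral_by_parts_primitives[OF \<open>a \<le> b\<close> L2_set_integrable[OF g] L2_set_integrable[OF g']
      is_primitiveD(3)[OF assms(2)] is_primitiveD(3)[OF assms(3)]]
  have "L2ip a b n g c' + L2ip a b n c g'
      = integral\<^sup>L (lborel_on a b) (\<lambda>x. \<Sum>i<n. g x i * c' x i + c x i * g' x i)"
    using integrable_L2ip[OF g is_primitive_in_L2[OF assms(3)]]
      integrable_L2ip[OF is_primitive_in_L2[OF assms(2)] g']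
    by (simp add: L2ip_eq_integral sum.distrib)
  also have "\<dots> = (\<Sum>i<n. c b i * c' b i - c a i * c' a i)"
    using ibp by (simp add: Bochner_Integration.integral_sum)
  finally show ?thesis
    by (simp add: dotk_def sum_subtractf)
qed

lemma is_primitive_same_mean:
  assumes "a < b" and u: "u \<in> L2 a b n" and v: "v \<in> L2 a b n"
  obtains c where "is_primitive a b n c v" and "\<And>i. (LINT x:{a..b}|lborel. u x i - c x i) = 0"
proof -
  define V where "V x i = (LINT t:{a..x}|lborel. v t i)" for x i
  define m where "m i = (if i < n then (LINT x:{a..b}|lborel. u x i - V x i) / (b - a) else 0)" for i
  define c where "c x i = m i + V x i" for x i
  have "is_primitive a b n c v"
    unfolding c_def V_def by (rule is_primitive_indefinite_integral[OF v]) (simp add: Rvec_def m_def)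
  moreover have "(LINT x:{a..b}|lborel. u x i - c x i) = 0" for i
  proof (cases "i < n")
    case True
    have "set_integrable lborel {a..b} (\<lambda>x. V x i)"
      unfolding V_def
      by (rule borel_integrable_atLeastAtMost'[OF continuous_on_indefinite_set_integral[OF L2_set_integrable[OF v True]]])
    then have uV: "set_integrable lborel {a..b} (\<lambda>x. u x i - V x i)"
      by (rule set_integral_diff(1)[OF L2_set_integrable[OF u True]])
    have "(LINT x:{a..b}|lborel. u x i - c x i) = (LINT x:{a..b}|lborel. (u x i - V x i) - m i)"
      unfolding c_def by (simp add: algebra_simps)
    also have "\<dots> = (LINT x:{a..b}|lborel. u x i - V x i) - (b - a) * m i"
      using set_integral_diff(2)[OF uV borel_integrable_atLeastAtMost'[OF continuous_on_const]]
        \<open>a < b\<close> by (simp add: set_integral_Icc_const)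
    finally show ?thesis
      using \<open>a < b\<close> True by (simp add: m_def)
  qed (simp add: c_def m_def V_def L2_vanishing[OF u] L2_vanishing[OF v])
  ultimately show thesis
    by (rule that)
qed

text \<open>The du Bois-Reymond lemma. Test with the primitive of \<open>u - c\<close>, where \<open>c\<close> is the
  primitive of \<open>v\<close> with the same mean as \<open>u\<close>.\<close>

lemma is_primitive_of_weak_derivative:
  assumes "a < b" and u: "u \<in> L2 a b n" and v: "v \<in> L2 a b n"
    and weak: "\<And>c g. is_primitive a b n c g \<Longrightarrow> c a = (\<lambda>i. 0) \<Longrightarrow> c b = (\<lambda>i. 0) \<Longrightarrow>
      L2ip a b n g u + L2ip a b n c v = 0"
  obtains c where "is_primitive a b n c v" and "AE x in lborel_on a b. \<forall>i<n. u x i = c x i"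
proof -
  obtain c where c: "is_primitive a b n c v" and mean: "\<And>i. (LINT x:{a..b}|lborel. u x i - c x i) = 0"
    using is_primitive_same_mean[OF assms(1-3)] by blast
  define g where "g x i = u x i - c x i" for x i
  have g: "g \<in> L2 a b n"
    unfolding g_def by (rule L2_diff[OF u is_primitive_in_L2[OF c]])
  define C where "C x i = (LINT t:{a..x}|lborel. g t i)" for x i
  have C: "is_primitive a b n C g"
    using is_primitive_indefinite_integral[OF g zero_in_Rvec] by (simp add: C_def[abs_def])
  have Ca: "C a = (\<lambda>i. 0)" and Cb: "C b = (\<lambda>i. 0)"
    using mean by (simp_all add: C_def g_def fun_eq_iff)
  have "L2ip a b n g u + L2ip a b n C v = 0"
    by (rule weak[OF C Ca Cb])
  moreover have "L2ip a b n g c + L2ip a b n C v = 0"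
    using L2ip_by_parts[OF _ C c] \<open>a < b\<close> by (simp add: Ca Cb)
  moreover have "L2ip a b n g g = L2ip a b n g u - L2ip a b n g c"
  proof -
    have "(\<lambda>x i. u x i - c x i) = g"
      by (simp add: g_def fun_eq_iff)
    then show ?thesis
      using L2ip_diff_left[OF u is_primitive_in_L2[OF c] g]
      by (simp add: L2ip_commute[of a b n u g] L2ip_commute[of a b n c g])
  qed
  ultimately have "L2ip a b n g g = 0"
    by simp
  then have "AE x in lborel_on a b. \<forall>i<n. g x i = 0"
    by (rule L2ip_self_eq_0D[OF g])
  then show thesis
    by (intro that[OF c]) (simp add: g_def)
qed

lemma H1rep_iff:
  "H1rep a b n e c g \<longleftrightarrow>
     e \<in> L2 a b n \<and> is_primitive a b n c g \<and> (AE x in lborel_on a b. e x = c x)"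
  unfolding H1rep_def is_primitive_def AE_lborel_on_iff by blast

section \<open>The Dirac structure \<open>D\<^sup>A\<close>\<close>

lemma invertible_matE:
  assumes "invertible_mat n M"
  obtains M' where "\<forall>i<n. \<forall>j<n. (\<Sum>k<n. M i k * M' k j) = (if i = j then 1 else 0)"
    and "\<forall>i<n. \<forall>j<n. (\<Sum>k<n. M' i k * M k j) = (if i = j then 1 else 0)"
  using assms unfolding invertible_mat_def by blast

locale stochastic_phs =
  fixes a b dt :: real and n :: nat and P1 P0 :: "nat \<Rightarrow> nat \<Rightarrow> real"
    and H :: "'z::real_inner \<Rightarrow> real \<Rightarrow> nat \<Rightarrow> real" and Hs :: "(real \<Rightarrow> nat \<Rightarrow> real) \<Rightarrow> 'z"
  assumes a_less_b: "a < b" and dt_pos: "0 < dt"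
    and P1_sym: "sym_mat n P1" and P1_invertible: "invertible_mat n P1" and P0_skew: "skew_mat n P0"
    and H_L2: "H z \<in> L2 a b n" and H_adjoint: "is_adjoint a b n H Hs"
begin

abbreviation D\<^sub>A where "D\<^sub>A \<equiv> DA a b n dt P1 P0 H Hs"

text \<open>\<open>J e e'\<close> is \<open>\<J>e = P\<^sub>1 de/d\<zeta> + P\<^sub>0 e\<close>, with \<open>e'\<close> the weak derivative of \<open>e\<close>.\<close>

definition J :: "(real \<Rightarrow> nat \<Rightarrow> real) \<Rightarrow> (real \<Rightarrow> nat \<Rightarrow> real) \<Rightarrow> real \<Rightarrow> nat \<Rightarrow> real" where
  "J e e' x i = mv n P1 (e' x) i + mv n P0 (e x) i"

definition flow_bd :: "(real \<Rightarrow> nat \<Rightarrow> real) \<Rightarrow> nat \<Rightarrow> real" where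
  "flow_bd c = (\<lambda>i. 1 / sqrt 2 * mv n P1 (\<lambda>k. c b k - c a k) i * dt)"

definition effort_bd :: "(real \<Rightarrow> nat \<Rightarrow> real) \<Rightarrow> nat \<Rightarrow> real" where
  "effort_bd c = (\<lambda>i. 1 / sqrt 2 * (c b i + c a i))"

lemma boundary_vanishing:
  "c a = (\<lambda>i. 0) \<Longrightarrow> c b = (\<lambda>i. 0) \<Longrightarrow> flow_bd c = (\<lambda>i. 0) \<and> effort_bd c = (\<lambda>i. 0)"
  by (simp add: flow_bd_def effort_bd_def)

lemma L2_J: "e \<in> L2 a b n \<Longrightarrow> e' \<in> L2 a b n \<Longrightarrow> J e e' \<in> L2 a b n"
  unfolding J_def[abs_def] by (intro L2_add L2_mv)

lemma L2ip_H: "f \<in> L2 a b n \<Longrightarrow> L2ip a b n (H z) f = inner z (Hs f)"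
  using H_adjoint by (simp add: is_adjoint_def)

lemma Hs_zero [simp]: "Hs (\<lambda>x i. 0) = 0"
proof -
  have "inner z (Hs (\<lambda>x i. 0)) = 0" for z
    using L2ip_H[OF L2_const[OF zero_in_Rvec], of z] by (simp add: L2ip_def)
  then show ?thesis
    by (metis inner_eq_zero_iff)
qed

lemma DA_iff:
  "((dfe, dfw, dfd), (ee, ew, ed)) \<in> D\<^sub>A \<longleftrightarrow>
     dfe \<in> L2 a b n \<and> ew = Hs ee \<and>
     (\<exists>c g. H1rep a b n ee c g \<and> dfd = flow_bd c \<and> ed = effort_bd c \<and>
        (AE x in lborel_on a b. \<forall>i<n. dfe x i = dt * J ee g x i + H dfw x i))"
proof -
  have eq: "(AE x in lborel. x \<in> {a..b} \<longrightarrow> dfe x = (\<lambda>i. (mv n P1 (g x) i + mv n P0 (ee x) i) * dt + H dfw x i))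
      \<longleftrightarrow> (AE x in lborel_on a b. \<forall>i<n. dfe x i = dt * J ee g x i + H dfw x i)"
    if "dfe \<in> L2 a b n" for g
  proof -
    have "dfe x = (\<lambda>i. (mv n P1 (g x) i + mv n P0 (ee x) i) * dt + H dfw x i) \<longleftrightarrow>
        (\<forall>i<n. dfe x i = dt * J ee g x i + H dfw x i)" for x
      using L2_vanishing[OF that] L2_vanishing[OF H_L2]
      by (auto simp: fun_eq_iff J_def mv_def mult.commute not_less)
    then show ?thesis
      by (simp add: AE_lborel_on_iff)
  qed
  have flow: "flow_bd c \<in> Rvec n" for c
    by (simp add: flow_bd_def Rvec_def mv_def)
  have effort: "effort_bd c \<in> Rvec n" if "H1rep a b n ee c g" for c g
    using that by (simp add: H1rep_def effort_bd_def Rvec_def)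
  have ee: "ee \<in> L2 a b n" if "H1rep a b n ee c g" for c g
    using that by (simp add: H1rep_def)
  show ?thesis
    unfolding DA_def mem_Collect_eq prod.case flow_bd_def[symmetric] effort_bd_def[symmetric]
    using eq flow effort ee by blast
qed

lemma DA_Rvec: "((dfe, dfw, dfd), (ee, ew, ed)) \<in> D\<^sub>A \<Longrightarrow> dfd \<in> Rvec n \<and> ed \<in> Rvec n"
  by (simp add: DA_def)

lemma DA_memI:
  assumes "is_primitive a b n c g"
  shows "((\<lambda>x i. dt * J c g x i + H w x i, w, flow_bd c), (c, Hs c, effort_bd c)) \<in> D\<^sub>A"
proof -
  have "H1rep a b n c c g"
    using assms by (simp add: H1rep_iff is_primitive_in_L2)
  moreover have "(\<lambda>x i. dt * J c g x i + H w x i) \<in> L2 a b n"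
    using assms by (intro L2_add L2_mult L2_J H_L2 is_primitive_in_L2 is_primitiveD(1))
  ultimately show ?thesis
    unfolding DA_iff by auto
qed

lemma L2ip_J_Green:
  assumes h: "H1rep a b n e c g" and h': "H1rep a b n e' c' g'"
  shows "L2ip a b n (J e g) e' + L2ip a b n e (J e' g')
       = dotk n (c b) (mv n P1 (c' b)) - dotk n (c a) (mv n P1 (c' a))"
proof -
  have e: "e \<in> L2 a b n" and c: "is_primitive a b n c g" and ec: "AE x in lborel_on a b. e x = c x"
    using h by (simp_all add: H1rep_iff)
  have e': "e' \<in> L2 a b n" and c': "is_primitive a b n c' g'" and ec': "AE x in lborel_on a b. e' x = c' x"
    using h' by (simp_all add: H1rep_iff)
  note g = is_primitiveD(1)[OF c] and g' = is_primitiveD(1)[OF c']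
  have "L2ip a b n (J e g) e' = L2ip a b n g (\<lambda>x. mv n P1 (e' x)) - L2ip a b n e (\<lambda>x. mv n P0 (e' x))"
    using L2ip_add_left[OF L2_mv[OF g] L2_mv[OF e] e']
    by (simp add: J_def[abs_def] L2ip_mv_sym[OF P1_sym] L2ip_mv_skew[OF P0_skew])
  moreover have "L2ip a b n e (J e' g') = L2ip a b n e (\<lambda>x. mv n P1 (g' x)) + L2ip a b n e (\<lambda>x. mv n P0 (e' x))"
    using L2ip_add_left[OF L2_mv[OF g'] L2_mv[OF e'] e]
    by (simp add: J_def[abs_def] L2ip_commute[of a b n e])
  moreover have "L2ip a b n g (\<lambda>x. mv n P1 (e' x)) = L2ip a b n g (\<lambda>x. mv n P1 (c' x))"
  proof -
    have "AE x in lborel_on a b. \<forall>i<n. mv n P1 (e' x) i = mv n P1 (c' x) i"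
      using ec' by eventually_elim simp
    then show ?thesis
      using L2ip_cong_AE_left[OF L2_mv[OF e'] L2_mv[OF is_primitive_in_L2[OF c']] g]
      by (simp add: L2ip_commute[of a b n g])
  qed
  moreover have "L2ip a b n e (\<lambda>x. mv n P1 (g' x)) = L2ip a b n c (\<lambda>x. mv n P1 (g' x))"
  proof (rule L2ip_cong_AE_left[OF e is_primitive_in_L2[OF c] L2_mv[OF g']])
    show "AE x in lborel_on a b. \<forall>i<n. e x i = c x i"
      using ec by eventually_elim simp
  qed
  moreover have "L2ip a b n g (\<lambda>x. mv n P1 (c' x)) + L2ip a b n c (\<lambda>x. mv n P1 (g' x))
      = dotk n (c b) (mv n P1 (c' b)) - dotk n (c a) (mv n P1 (c' a))"
    by (rule L2ip_by_parts[OF _ c is_primitive_mv[OF c']]) (use a_less_b in simp)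
  ultimately show ?thesis
    by simp
qed

lemma boundary_pairing:
  "dotk n (flow_bd c) (effort_bd c') + dotk n (effort_bd c) (flow_bd c')
     = dt * (dotk n (c b) (mv n P1 (c' b)) - dotk n (c a) (mv n P1 (c' a)))"
proof -
  define B where "B u v = dotk n (mv n P1 u) v" for u v
  have B_sym: "B u v = B v u" for u v
    unfolding B_def by (metis dotk_commute dotk_mv_sym[OF P1_sym])
  have B_bilinear: "dotk n (\<lambda>i. r * mv n P1 (\<lambda>k. u k - v k) i * s) (\<lambda>i. t * (u' i + v' i))
      = r * s * t * (B u u' + B u v' - B v u' - B v v')" for r s t u v u' v'
    unfolding B_def dotk_def mv_diff
    by (simp add: algebra_simps sum.distrib sum_subtractf sum_distrib_left)
  have half: "1 / sqrt 2 * (1 / sqrt 2) = (1 / 2 :: real)"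
    by (simp add: divide_simps)
  have "dotk n (flow_bd c) (effort_bd c') = dt / 2 * (B (c b) (c' b) + B (c b) (c' a) - B (c a) (c' b) - B (c a) (c' a))"
    unfolding flow_bd_def effort_bd_def B_bilinear by (simp add: half)
  moreover have "dotk n (effort_bd c) (flow_bd c') = dt / 2 * (B (c' b) (c b) + B (c' b) (c a) - B (c' a) (c b) - B (c' a) (c a))"
    unfolding flow_bd_def effort_bd_def dotk_commute[of n "\<lambda>i. 1 / sqrt 2 * (c b i + c a i)"] B_bilinear
    by (simp add: half)
  moreover have "dotk n (c b) (mv n P1 (c' b)) = B (c' b) (c b)" "dotk n (c a) (mv n P1 (c' a)) = B (c' a) (c a)"
    by (simp_all add: B_def dotk_commute)
  ultimately show ?thesis
    using B_sym[of "c b" "c' a"] B_sym[of "c a" "c' b"] B_sym[of "c b" "c' b"] B_sym[of "c a" "c' a"]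
    by (simp add: algebra_simps)
qed

lemma DA_power_balance:
  assumes x: "((dfe, dfw, dfd), (ee, ew, ed)) \<in> D\<^sub>A"
    and y: "((dfe', dfw', dfd'), (ee', ew', ed')) \<in> D\<^sub>A"
  shows "L2ip a b n dfe ee' - inner dfw ew' + L2ip a b n ee dfe' - inner ew dfw'
       = dotk n dfd ed' + dotk n ed dfd'"
proof -
  obtain c g where dfe: "dfe \<in> L2 a b n" and ew: "ew = Hs ee" and h: "H1rep a b n ee c g"
    and bd: "dfd = flow_bd c" "ed = effort_bd c"
    and AE: "AE x in lborel_on a b. \<forall>i<n. dfe x i = dt * J ee g x i + H dfw x i"
    using x unfolding DA_iff by blast
  obtain c' g' where dfe': "dfe' \<in> L2 a b n" and ew': "ew' = Hs ee'" and h': "H1rep a b n ee' c' g'"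
    and bd': "dfd' = flow_bd c'" "ed' = effort_bd c'"
    and AE': "AE x in lborel_on a b. \<forall>i<n. dfe' x i = dt * J ee' g' x i + H dfw' x i"
    using y unfolding DA_iff by blast
  have ee: "ee \<in> L2 a b n" and ee': "ee' \<in> L2 a b n"
    using h h' by (simp_all add: H1rep_def)
  have U: "J ee g \<in> L2 a b n" and U': "J ee' g' \<in> L2 a b n"
    using h h' by (simp_all add: H1rep_def L2_J)
  have "L2ip a b n dfe ee' = L2ip a b n (\<lambda>x i. dt * J ee g x i + H dfw x i) ee'"
    by (rule L2ip_cong_AE_left[OF dfe L2_add[OF L2_mult[OF U] H_L2] ee' AE])
  also have "\<dots> = dt * L2ip a b n (J ee g) ee' + inner dfw ew'"
    using L2ip_add_left[OF L2_mult[OF U] H_L2 ee'] by (simp add: L2ip_mult_left L2ip_H[OF ee'] ew')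
  finally have 1: "L2ip a b n dfe ee' = dt * L2ip a b n (J ee g) ee' + inner dfw ew'" .
  have "L2ip a b n dfe' ee = L2ip a b n (\<lambda>x i. dt * J ee' g' x i + H dfw' x i) ee"
    by (rule L2ip_cong_AE_left[OF dfe' L2_add[OF L2_mult[OF U'] H_L2] ee AE'])
  also have "\<dots> = dt * L2ip a b n (J ee' g') ee + inner dfw' ew"
    using L2ip_add_left[OF L2_mult[OF U'] H_L2 ee] by (simp add: L2ip_mult_left L2ip_H[OF ee] ew)
  finally have 2: "L2ip a b n ee dfe' = dt * L2ip a b n ee (J ee' g') + inner ew dfw'"
    by (simp add: L2ip_commute[of a b n ee] inner_commute[of ew])
  show ?thesis
    unfolding 1 2 bd bd' boundary_pairing L2ip_J_Green[OF h h', symmetric]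
    by (simp add: algebra_simps)
qed

lemma DA_boundary_surjective:
  assumes F: "F \<in> Rvec n" and E: "E \<in> Rvec n"
  obtains c g where "is_primitive a b n c g" "flow_bd c = F" "effort_bd c = E"
proof -
  obtain Q where Q: "\<forall>i<n. \<forall>j<n. (\<Sum>k<n. P1 i k * Q k j) = (if i = j then 1 else 0)"
    using P1_invertible by (elim invertible_matE)
  define \<delta> where "\<delta> = (\<lambda>i. sqrt 2 / dt * mv n Q F i)"
  define \<alpha> where "\<alpha> = (\<lambda>i. (sqrt 2 * E i - \<delta> i) / 2)"
  define c where "c x i = \<alpha> i + (LINT t:{a..x}|lborel. \<delta> i / (b - a))" for x i
  have "\<delta> \<in> Rvec n" "\<alpha> \<in> Rvec n"
    using E by (simp_all add: Rvec_def \<delta>_def \<alpha>_def mv_def)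
  then have c: "is_primitive a b n c (\<lambda>x i. \<delta> i / (b - a))"
    unfolding c_def by (intro is_primitive_indefinite_integral L2_const) (simp add: Rvec_def)
  have ca: "c a = \<alpha>" and cb: "c b = (\<lambda>i. \<alpha> i + \<delta> i)"
    using a_less_b by (simp_all add: c_def set_integral_Icc_const fun_eq_iff)
  have "(\<lambda>k. c b k - c a k) = (\<lambda>k. sqrt 2 / dt * mv n Q F k)"
    by (simp add: ca cb \<delta>_def)
  then have "flow_bd c = (\<lambda>i. 1 / sqrt 2 * (sqrt 2 / dt * F i) * dt)"
    by (simp only: flow_bd_def mv_mult mv_right_inverse[OF Q F])
  then have "flow_bd c = F"
    using dt_pos by (simp add: fun_eq_iff)
  moreover have "effort_bd c = E"
    by (simp add: effort_bd_def ca cb \<alpha>_def fun_eq_iff field_simps)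
  ultimately show thesis
    by (rule that[OF c])
qed

lemma DA_orthogonal_weak_derivative:
  assumes dfe: "dfe \<in> L2 a b n" and ee: "ee \<in> L2 a b n" and c: "is_primitive a b n c g"
    and orth: "L2ip a b n (\<lambda>x i. dt * J c g x i + H 0 x i) ee + L2ip a b n c dfe - inner (Hs c) dfw = 0"
  shows "L2ip a b n g (\<lambda>x. mv n P1 (ee x))
      + L2ip a b n c (\<lambda>x i. 1 / dt * (dfe x i - H dfw x i) - mv n P0 (ee x) i) = 0"
proof -
  define v where "v = (\<lambda>x i. 1 / dt * (dfe x i - H dfw x i) - mv n P0 (ee x) i)"
  have v: "v \<in> L2 a b n"
    unfolding v_def by (intro L2_diff L2_mult L2_mv dfe ee H_L2)
  note g = is_primitiveD(1)[OF c] and cL = is_primitive_in_L2[OF c]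
  have "L2ip a b n (\<lambda>x i. dt * J c g x i + H 0 x i) ee = dt * L2ip a b n (J c g) ee"
    using L2ip_add_left[OF L2_mult[OF L2_J[OF cL g]] H_L2 ee] by (simp add: L2ip_mult_left L2ip_H[OF ee])
  also have "L2ip a b n (J c g) ee = L2ip a b n g (\<lambda>x. mv n P1 (ee x)) + L2ip a b n (\<lambda>x. mv n P0 (c x)) ee"
    using L2ip_add_left[OF L2_mv[OF g] L2_mv[OF cL] ee]
    by (simp add: J_def[abs_def] L2ip_mv_sym[OF P1_sym])
  finally have 1: "L2ip a b n (\<lambda>x i. dt * J c g x i + H 0 x i) ee
      = dt * (L2ip a b n g (\<lambda>x. mv n P1 (ee x)) + L2ip a b n (\<lambda>x. mv n P0 (c x)) ee)" .
  have "L2ip a b n c dfe - inner (Hs c) dfw = L2ip a b n (\<lambda>x i. dfe x i - H dfw x i) c"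
    using L2ip_diff_left[OF dfe H_L2 cL] L2ip_H[OF cL, of dfw]
    by (simp add: L2ip_commute[of a b n c] inner_commute)
  also have "\<dots> = L2ip a b n (\<lambda>x i. dt * (v x i + mv n P0 (ee x) i)) c"
    using dt_pos by (intro L2ip_cong_left) (simp add: v_def)
  also have "\<dots> = dt * (L2ip a b n c v - L2ip a b n (\<lambda>x. mv n P0 (c x)) ee)"
    using L2ip_add_left[OF v L2_mv[OF ee] cL]
    by (simp add: L2ip_mult_left L2ip_mv_skew[OF P0_skew] L2ip_commute[of a b n v] L2ip_commute[of a b n ee])
  finally have 2: "L2ip a b n c dfe - inner (Hs c) dfw
      = dt * (L2ip a b n c v - L2ip a b n (\<lambda>x. mv n P0 (c x)) ee)" .
  have "dt * (L2ip a b n g (\<lambda>x. mv n P1 (ee x)) + L2ip a b n (\<lambda>x. mv n P0 (c x)) ee)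
      + dt * (L2ip a b n c v - L2ip a b n (\<lambda>x. mv n P0 (c x)) ee) = 0"
    using orth unfolding 1[symmetric] 2[symmetric] by linarith
  then have "dt * (L2ip a b n g (\<lambda>x. mv n P1 (ee x)) + L2ip a b n c v) = 0"
    by (simp add: algebra_simps)
  then show ?thesis
    using dt_pos by (simp add: v_def)
qed

text \<open>The du Bois-Reymond lemma
  produces the weak derivative of \<open>P\<^sub>1 e\<^sub>\<epsilon>\<close>, and \<open>P\<^sub>1\<^sup>-\<^sup>1\<close> turns it into one of \<open>e\<^sub>\<epsilon>\<close>.\<close>

lemma DA_memI_orthogonal:
  assumes dfe: "dfe \<in> L2 a b n" and ee: "ee \<in> L2 a b n"
    and orth: "\<And>c g. is_primitive a b n c g \<Longrightarrow> c a = (\<lambda>i. 0) \<Longrightarrow> c b = (\<lambda>i. 0) \<Longrightarrow>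
      L2ip a b n (\<lambda>x i. dt * J c g x i + H 0 x i) ee + L2ip a b n c dfe - inner (Hs c) dfw = 0"
  obtains c where "((dfe, dfw, flow_bd c), (ee, Hs ee, effort_bd c)) \<in> D\<^sub>A"
proof -
  define v where "v = (\<lambda>x i. 1 / dt * (dfe x i - H dfw x i) - mv n P0 (ee x) i)"
  have v: "v \<in> L2 a b n"
    unfolding v_def by (intro L2_diff L2_mult L2_mv dfe ee H_L2)
  obtain k where k: "is_primitive a b n k v"
    and k_AE: "AE x in lborel_on a b. \<forall>i<n. mv n P1 (ee x) i = k x i"
    using is_primitive_of_weak_derivative[OF a_less_b L2_mv[OF ee] v]
      DA_orthogonal_weak_derivative[OF dfe ee _ orth, folded v_def] by blast
  obtain Q where PQ: "\<forall>i<n. \<forall>j<n. (\<Sum>l<n. P1 i l * Q l j) = (if i = j then 1 else 0)"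
    and QP: "\<forall>i<n. \<forall>j<n. (\<Sum>l<n. Q i l * P1 l j) = (if i = j then 1 else 0)"
    using P1_invertible by (elim invertible_matE)
  define c where "c = (\<lambda>x. mv n Q (k x))"
  define g where "g = (\<lambda>x. mv n Q (v x))"
  have ee_Rvec: "ee x \<in> Rvec n" and v_Rvec: "v x \<in> Rvec n" for x
    using L2_vanishing[OF ee] L2_vanishing[OF dfe] L2_vanishing[OF H_L2]
    by (simp_all add: Rvec_def v_def mv_def)
  have "AE x in lborel_on a b. ee x = c x"
    using k_AE
  proof eventually_elim
    case (elim x)
    have "ee x = mv n Q (mv n P1 (ee x))"
      by (rule mv_right_inverse[OF QP ee_Rvec, symmetric])
    also have "\<dots> = c x"
      unfolding c_def by (rule mv_cong) (simp add: elim)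
    finally show ?case .
  qed
  then have "H1rep a b n ee c g"
    unfolding H1rep_iff c_def g_def using ee is_primitive_mv[OF k] by blast
  moreover have "dfe x i = dt * J ee g x i + H dfw x i" for x i
  proof -
    have "mv n P1 (g x) = v x"
      unfolding g_def by (rule mv_right_inverse[OF PQ v_Rvec])
    then show ?thesis
      using dt_pos by (simp add: J_def v_def)
  qed
  ultimately show thesis
    using dfe by (intro that[of c]) (auto simp: DA_iff)
qed

end

section \<open>Composition with \<open>D\<^sup>B\<close>\<close>

lemma orthD: "y \<in> orth B pair D \<Longrightarrow> x \<in> D \<Longrightarrow> pair x y = 0"
  and orth_subset_bond: "orth B pair D \<subseteq> B"
  by (auto simp: orth_def)

locale phs_composition = stochastic_phs +
  fixes p :: nat and j3 :: "'f::real_inner \<Rightarrow> 'e::real_inner"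
    and DB :: "(('f \<times> (nat \<Rightarrow> real)) \<times> ('e \<times> (nat \<Rightarrow> real))) set"
  assumes p_le_n: "p \<le> n" and j3_linear: "linear j3" and j3_bij: "bij j3"
    and DB_dirac: "dirac (bondB p) (pairB p j3) DB"
begin

abbreviation D\<^sub>A\<^sub>B where "D\<^sub>A\<^sub>B \<equiv> compAB a b n p dt P1 P0 H Hs DB"

lemma DB_isotropic: "x \<in> DB \<Longrightarrow> y \<in> DB \<Longrightarrow> pairB p j3 x y = 0"
  using DB_dirac unfolding dirac_def orth_def by blast

lemma DB_memI: "y \<in> bondB p \<Longrightarrow> (\<And>x. x \<in> DB \<Longrightarrow> pairB p j3 x y = 0) \<Longrightarrow> y \<in> DB"
  using DB_dirac unfolding dirac_def orth_def by blast

lemma zero_in_DB: "((0, \<lambda>i. 0), (0, \<lambda>i. 0)) \<in> DB"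
proof (rule DB_memI)
  have "j3 0 = 0"
    by (rule linear_0[OF j3_linear])
  then have "inv j3 0 = 0"
    by (metis bij_is_inj inv_f_f j3_bij)
  then show "pairB p j3 x ((0, \<lambda>i. 0), (0, \<lambda>i. 0)) = 0" for x
    using \<open>j3 0 = 0\<close> by (auto simp: pairB_def split: prod.splits)
qed (simp add: bondB_def)

lemma compAB_memI:
  assumes "((dfe, dfw, join n p F f), (ee, ew, join n p E e)) \<in> D\<^sub>A" "((fB, \<lambda>i. - f i), (eB, e)) \<in> DB"
    and "F \<in> Rvec (n - p)" "E \<in> Rvec (n - p)" "f \<in> Rvec p" "e \<in> Rvec p"
  shows "((dfe, dfw, F, fB), (ee, ew, E, eB)) \<in> D\<^sub>A\<^sub>B"
  using assms unfolding compAB_def by blast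

lemma compAB_subset_bondC: "D\<^sub>A\<^sub>B \<subseteq> bondC a b n p"
  by (auto simp: compAB_def bondC_def DA_iff H1rep_def)

lemma compAB_vanishing_memI:
  assumes "is_primitive a b n c g" "c a = (\<lambda>i. 0)" "c b = (\<lambda>i. 0)"
  shows "((\<lambda>x i. dt * J c g x i + H w x i, w, \<lambda>i. 0, 0), (c, Hs c, \<lambda>i. 0, 0)) \<in> D\<^sub>A\<^sub>B"
  using DA_memI[OF assms(1), of w] boundary_vanishing[OF assms(2,3)] zero_in_DB
  by (intro compAB_memI[where f = "\<lambda>i. 0" and e = "\<lambda>i. 0"]) simp_all

text \<open>By the power balance of \<open>D\<^sup>A\<close>, the pairing of two candidates for the
  composition reduces to their boundary data.\<close>

lemma pairC_join:
  assumes "((dfe, dfw, join n p F f), (ee, ew, join n p E e)) \<in> D\<^sub>A"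
    and "((dfe', dfw', join n p F' f'), (ee', ew', join n p E' e')) \<in> D\<^sub>A"
  shows "pairC a b n p j3 ((dfe, dfw, F, fB), (ee, ew, E, eB)) ((dfe', dfw', G, fB'), (ee', ew', K, eB'))
    = dotk (n - p) F (\<lambda>i. E' i - K i) + dotk (n - p) E (\<lambda>i. F' i - G i)
      + pairB p j3 ((fB, \<lambda>i. - f i), (eB, e)) ((fB', \<lambda>i. - f' i), (eB', e'))"
  using DA_power_balance[OF assms]
  by (simp add: pairC_def pairB_def dotk_join[OF p_le_n] dotk_diff_right dotk_minus_left dotk_minus_right)

lemma compAB_isotropic:
  assumes "x \<in> D\<^sub>A\<^sub>B" "y \<in> D\<^sub>A\<^sub>B"
  shows "pairC a b n p j3 x y = 0"
proof -
  obtain dfe dfw F fB ee ew E eB f e where x: "x = ((dfe, dfw, F, fB), (ee, ew, E, eB))"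
    and xA: "((dfe, dfw, join n p F f), (ee, ew, join n p E e)) \<in> D\<^sub>A"
    and xB: "((fB, \<lambda>i. - f i), (eB, e)) \<in> DB"
    using assms(1) unfolding compAB_def by blast
  obtain dfe' dfw' F' fB' ee' ew' E' eB' f' e' where y: "y = ((dfe', dfw', F', fB'), (ee', ew', E', eB'))"
    and yA: "((dfe', dfw', join n p F' f'), (ee', ew', join n p E' e')) \<in> D\<^sub>A"
    and yB: "((fB', \<lambda>i. - f' i), (eB', e')) \<in> DB"
    using assms(2) unfolding compAB_def by blast
  show ?thesis
    unfolding x y pairC_join[OF xA yA] DB_isotropic[OF xB yB] by simp
qed

text \<open>The finite dimensional part of the maximality argument; only the maximality of
  \<open>D\<^sup>B\<close> enters.\<close>

lemma orthogonal_boundary_dataD: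
  assumes F: "F \<in> Rvec (n - p)" and E: "E \<in> Rvec (n - p)"
    and F': "F' \<in> Rvec (n - p)" and E': "E' \<in> Rvec (n - p)" and f': "f' \<in> Rvec p" and e': "e' \<in> Rvec p"
    and orth: "\<And>G K g k gB kB. G \<in> Rvec (n - p) \<Longrightarrow> K \<in> Rvec (n - p) \<Longrightarrow>
      g \<in> Rvec p \<Longrightarrow> k \<in> Rvec p \<Longrightarrow> ((gB, \<lambda>i. - g i), (kB, k)) \<in> DB \<Longrightarrow>
      dotk (n - p) G (\<lambda>i. E' i - E i) + dotk (n - p) K (\<lambda>i. F' i - F i)
        + pairB p j3 ((gB, \<lambda>i. - g i), (kB, k)) ((fB, \<lambda>i. - f' i), (eB, e')) = 0"
  shows "F' = F" and "E' = E" and "((fB, \<lambda>i. - f' i), (eB, e')) \<in> DB"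
proof -
  show "F' = F"
  proof (rule Rvec_eqI_dotk[OF F' F])
    fix w assume "w \<in> Rvec (n - p)"
    from orth[OF zero_in_Rvec this zero_in_Rvec zero_in_Rvec, of 0 0] zero_in_DB
    show "dotk (n - p) w (\<lambda>i. F' i - F i) = 0"
      by (simp add: pairB_def)
  qed
  show "E' = E"
  proof (rule Rvec_eqI_dotk[OF E' E])
    fix w assume "w \<in> Rvec (n - p)"
    from orth[OF this zero_in_Rvec zero_in_Rvec zero_in_Rvec, of 0 0] zero_in_DB
    show "dotk (n - p) w (\<lambda>i. E' i - E i) = 0"
      by (simp add: pairB_def)
  qed
  show "((fB, \<lambda>i. - f' i), (eB, e')) \<in> DB"
  proof (rule DB_memI)
    show "((fB, \<lambda>i. - f' i), (eB, e')) \<in> bondB p"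
      using f' e' by (simp add: bondB_def Rvec_def)
    fix x assume x: "x \<in> DB"
    obtain gB g kB k where x_eq: "x = ((gB, g), (kB, k))"
      by (metis prod.collapse)
    have "g \<in> Rvec p" "k \<in> Rvec p"
      using x DB_dirac unfolding dirac_def bondB_def x_eq by auto
    then show "pairB p j3 x ((fB, \<lambda>i. - f' i), (eB, e')) = 0"
      using orth[OF zero_in_Rvec zero_in_Rvec, of "\<lambda>i. - g i" k gB kB] x
      unfolding x_eq by (simp add: Rvec_def)
  qed
qed

lemma orth_compAB_effort_w:
  assumes y: "((dfe, dfw, F, fB), (ee, ew, E, eB)) \<in> orth (bondC a b n p) (pairC a b n p j3) D\<^sub>A\<^sub>B"
  shows "ew = Hs ee"
proof -
  have ee: "ee \<in> L2 a b n"
    using subsetD[OF orth_subset_bond y] by (simp_all add: bondC_def)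
  have "inner z (Hs ee) - inner z ew = 0" for z
    using orthD[OF y compAB_vanishing_memI[OF is_primitive_zero, of z]]
    by (simp add: pairC_def J_def L2ip_H[OF ee])
  from this[of "Hs ee - ew"] show ?thesis
    by (simp flip: inner_diff_right)
qed

lemma orth_compAB_DA:
  assumes y: "((dfe, dfw, F, fB), (ee, ew, E, eB)) \<in> orth (bondC a b n p) (pairC a b n p j3) D\<^sub>A\<^sub>B"
  obtains c where "((dfe, dfw, flow_bd c), (ee, ew, effort_bd c)) \<in> D\<^sub>A"
proof -
  have dfe: "dfe \<in> L2 a b n" and ee: "ee \<in> L2 a b n"
    using subsetD[OF orth_subset_bond y] by (simp_all add: bondC_def)
  obtain c where "((dfe, dfw, flow_bd c), (ee, Hs ee, effort_bd c)) \<in> D\<^sub>A"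
  proof (rule DA_memI_orthogonal[OF dfe ee])
    show "L2ip a b n (\<lambda>x i. dt * J c g x i + H 0 x i) ee + L2ip a b n c dfe - inner (Hs c) dfw = 0"
      if "is_primitive a b n c g" "c a = (\<lambda>i. 0)" "c b = (\<lambda>i. 0)" for c g
      using orthD[OF y compAB_vanishing_memI[OF that, of 0]] by (simp add: pairC_def)
  qed
  then show thesis
    using that orth_compAB_effort_w[OF y] by simp
qed

text \<open>Every boundary value is attained in \<open>D\<^sup>A\<close>, so orthogonality to the composition
  tests the boundary data against arbitrary port values.\<close>

lemma orth_compAB_boundary:
  assumes y: "((dfe, dfw, F, fB), (ee, ew, E, eB)) \<in> orth (bondC a b n p) (pairC a b n p j3) D\<^sub>A\<^sub>B"
    and Y: "((dfe, dfw, join n p F' f'), (ee, ew, join n p E' e')) \<in> D\<^sub>A"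
    and "G \<in> Rvec (n - p)" "K \<in> Rvec (n - p)" "g \<in> Rvec p" "k \<in> Rvec p"
    and "((gB, \<lambda>i. - g i), (kB, k)) \<in> DB"
  shows "dotk (n - p) G (\<lambda>i. E' i - E i) + dotk (n - p) K (\<lambda>i. F' i - F i)
      + pairB p j3 ((gB, \<lambda>i. - g i), (kB, k)) ((fB, \<lambda>i. - f' i), (eB, e')) = 0"
proof -
  obtain c g' where "is_primitive a b n c g'" "flow_bd c = join n p G g" "effort_bd c = join n p K k"
    by (rule DA_boundary_surjective[OF join_in_Rvec join_in_Rvec])
  with DA_memI[of c g' 0]
  have X: "((\<lambda>x i. dt * J c g' x i + H 0 x i, 0, join n p G g), (c, Hs c, join n p K k)) \<in> D\<^sub>A"
    by simp
  have "((\<lambda>x i. dt * J c g' x i + H 0 x i, 0, G, gB), (c, Hs c, K, kB)) \<in> D\<^sub>A\<^sub>B"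
    by (rule compAB_memI[OF X]) (use assms(3-) in auto)
  from orthD[OF y this] show ?thesis
    unfolding pairC_join[OF X Y] by simp
qed

lemma orth_compAB_subset: "orth (bondC a b n p) (pairC a b n p j3) D\<^sub>A\<^sub>B \<subseteq> D\<^sub>A\<^sub>B"
proof
  fix y assume y: "y \<in> orth (bondC a b n p) (pairC a b n p j3) D\<^sub>A\<^sub>B"
  obtain dfe dfw F fB ee ew E eB where y_eq: "y = ((dfe, dfw, F, fB), (ee, ew, E, eB))"
    by (metis prod.collapse)
  have F: "F \<in> Rvec (n - p)" and E: "E \<in> Rvec (n - p)"
    using subsetD[OF orth_subset_bond y] by (simp_all add: bondC_def y_eq)
  obtain c where Y: "((dfe, dfw, flow_bd c), (ee, ew, effort_bd c)) \<in> D\<^sub>A"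
    using orth_compAB_DA y unfolding y_eq by blast
  obtain F' f' where F': "F' \<in> Rvec (n - p)" "f' \<in> Rvec p" and flow: "flow_bd c = join n p F' f'"
    using Rvec_join_cases[OF p_le_n] DA_Rvec[OF Y] by metis
  obtain E' e' where E': "E' \<in> Rvec (n - p)" "e' \<in> Rvec p" and effort: "effort_bd c = join n p E' e'"
    using Rvec_join_cases[OF p_le_n] DA_Rvec[OF Y] by metis
  have "dotk (n - p) G (\<lambda>i. E' i - E i) + dotk (n - p) K (\<lambda>i. F' i - F i)
      + pairB p j3 ((gB, \<lambda>i. - g i), (kB, k)) ((fB, \<lambda>i. - f' i), (eB, e')) = 0"
    if "G \<in> Rvec (n - p)" "K \<in> Rvec (n - p)" "g \<in> Rvec p" "k \<in> Rvec p"
      "((gB, \<lambda>i. - g i), (kB, k)) \<in> DB" for G K g k gB kB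
    by (rule orth_compAB_boundary[OF y[unfolded y_eq] Y[unfolded flow effort] that])
  then have data: "F' = F" "E' = E" "((fB, \<lambda>i. - f' i), (eB, e')) \<in> DB"
    using orthogonal_boundary_dataD[OF F E F'(1) E'(1) F'(2) E'(2)] by blast+
  show "y \<in> D\<^sub>A\<^sub>B"
    unfolding y_eq
    by (rule compAB_memI[OF Y[unfolded flow effort data(1,2)] data(3) F E F'(2) E'(2)])
qed

lemma dirac_compAB: "dirac (bondC a b n p) (pairC a b n p j3) D\<^sub>A\<^sub>B"
  unfolding dirac_def
proof (intro conjI compAB_subset_bondC equalityI orth_compAB_subset)
  show "D\<^sub>A\<^sub>B \<subseteq> orth (bondC a b n p) (pairC a b n p j3) D\<^sub>A\<^sub>B"
    using compAB_subset_bondC compAB_isotropic unfolding orth_def by blast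
qed

end

theorem proposition1:
  fixes a b dt :: real and n p :: nat
    and P1 P0 :: "nat \<Rightarrow> nat \<Rightarrow> real"
    and H :: "'z::{real_inner, complete_space} \<Rightarrow> real \<Rightarrow> nat \<Rightarrow> real"
    and Hs :: "(real \<Rightarrow> nat \<Rightarrow> real) \<Rightarrow> 'z"
    and j3 :: "'f::{real_inner, complete_space} \<Rightarrow> 'e::{real_inner, complete_space}"
    and DB :: "(('f \<times> (nat \<Rightarrow> real)) \<times> ('e \<times> (nat \<Rightarrow> real))) set"
  assumes "a < b" and "1 \<le> p" and "p \<le> n"
    and "sym_mat n P1" and "invertible_mat n P1" and "skew_mat n P0"
    and "bounded_L2_map a b n H" and "is_adjoint a b n H Hs"
    and "dt > 0"
    and "linear j3" and "bij j3" and "\<forall>x y. inner (j3 x) (j3 y) = inner x y"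
    and "dirac (bondB p) (pairB p j3) DB"
  shows "dirac (bondC a b n p) (pairC a b n p j3) (compAB a b n p dt P1 P0 H Hs DB)"
proof -
  interpret phs_composition a b dt n P1 P0 H Hs p j3 DB
    by (intro phs_composition.intro stochastic_phs.intro phs_composition_axioms.intro)
       (use assms in \<open>auto simp: bounded_L2_map_def\<close>)
  show ?thesis
    by (rule dirac_compAB)
qed

end
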